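(* Let $A$ be a regular ring and $S$ a metrizable subset of an $A$-module $M$. Then the set $\mathrm{conv}(S)=\{a_{1}x_{1}+\cdots+a_{n}x_{n}: n\ge1,\ x_{i}\in S,\ a_{i}\in B(A),\ a_1\oplus\cdots\oplus a_n=1\}$ is also a metrizable subset of $M$.
   Context: A regular ring is a commutative (unital) von Neumann regular ring. $B(A)$ is the set of idempotents of $A$; for pairwise disjoint idempotents $a_1,\dots,a_n$ ($a_ia_j=0$ for $i\ne j$), $a_1\oplus\cdots\oplus a_n$ denotes their sum. A subset $S$ of an $A$-module is metrizable if for all $x,y\in S$ the annihilator $\mathrm{Ann}(x-y)=\{a\in A: a(x-y)=0\}$ is a principal ideal of $A$. *)

theory Defs
  imports Complex_Main
begin

definition regular_ring :: "'a::comm_ring_1 itself \<Rightarrow> bool" where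
  "regular_ring _ \<longleftrightarrow> (\<forall>a::'a. \<exists>x. a * x * a = a)"

text \<open>B(A): the idempotents of A.\<close>
definition idempotents :: "'a::comm_ring_1 set" where
  "idempotents = {e. e * e = e}"

definition principal_ideal :: "'a::comm_ring_1 set \<Rightarrow> bool" where
  "principal_ideal I \<longleftrightarrow> (\<exists>g. I = {g * r | r. True})"

definition ann :: "('a::comm_ring_1 \<Rightarrow> 'b::ab_group_add \<Rightarrow> 'b) \<Rightarrow> 'b \<Rightarrow> 'a set" where
  "ann scale z = {a. scale a z = 0}"

definition metrizable :: "('a::comm_ring_1 \<Rightarrow> 'b::ab_group_add \<Rightarrow> 'b) \<Rightarrow> 'b set \<Rightarrow> bool" where
  "metrizable scale S \<longleftrightarrow> (\<forall>x\<in>S. \<forall>y\<in>S. principal_ideal (ann scale (x - y)))"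

definition conv :: "('a::comm_ring_1 \<Rightarrow> 'b::ab_group_add \<Rightarrow> 'b) \<Rightarrow> 'b set \<Rightarrow> 'b set" where
  "conv scale S = {y. \<exists>(n::nat) (a::nat \<Rightarrow> 'a) (x::nat \<Rightarrow> 'b). n \<ge> 1 \<and>
      (\<forall>i<n. x i \<in> S \<and> a i \<in> idempotents) \<and>
      (\<forall>i<n. \<forall>j<n. i \<noteq> j \<longrightarrow> a i * a j = 0) \<and>
      (\<Sum>i<n. a i) = 1 \<and>
      y = (\<Sum>i<n. scale (a i) (x i))}"

end

theory Submission
  imports Defs
begin

(* In a commutative von Neumann regular ring every principal ideal
   gA is generated by an idempotent (namely gx where gxg = g), and an ideal eA
   with e idempotent is exactly {r. r e = r}.  So S is metrizable iff every
   annihilator Ann(x - y), x, y in S, is of the form {r. r e = r} with e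
   idempotent.
   Two elements y = sum a_i x_i and y' = sum b_j x'_j of conv(S) are compared on
   the product partition of unity c_ij = a_i b_j: on the piece c_ij the
   difference y - y' agrees with x_i - x'_j.  If E_ij is the idempotent
   generator of Ann(x_i - x'_j), the glued element e = sum c_ij E_ij is again
   idempotent and generates Ann(y - y'). *)

lemma idempotent_ideal_eq:
  fixes e :: "'a::comm_ring_1"
  assumes "e * e = e"
  shows "{e * r | r. True} = {r. r * e = r}"
proof (intro set_eqI iffI)
  fix r assume "r \<in> {e * r | r. True}"
  then obtain s where "r = e * s" by blast
  then show "r \<in> {r. r * e = r}" using assms by (simp add: algebra_simps) (metis mult.assoc)
next
  fix r assume "r \<in> {r. r * e = r}"
  then show "r \<in> {e * r | r. True}" by (auto simp: mult.commute intro: exI[of _ r])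
qed

lemma principal_ideal_idempotent_generator:
  fixes I :: "'a::comm_ring_1 set"
  assumes "regular_ring TYPE('a)" and "principal_ideal I"
  obtains e where "e * e = e" and "I = {r. r * e = r}"
proof -
  obtain g where g: "I = {g * r | r. True}"
    using assms(2) unfolding principal_ideal_def by blast
  obtain x where x: "g * x * g = g"
    using assms(1) unfolding regular_ring_def by blast
  have idem: "(g * x) * (g * x) = g * x"
    using x by (metis mult.assoc)
  have "{g * r | r. True} = {(g * x) * r | r. True}"
  proof (intro set_eqI iffI)
    fix r assume "r \<in> {g * r | r. True}"
    then obtain s where "r = g * s" by blast
    moreover have "(g * x) * (g * s) = (g * x * g) * s" by (simp add: mult_ac)
    ultimately have "r = (g * x) * (g * s)" using x by simp
    then show "r \<in> {(g * x) * r | r. True}" by blast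
  qed (auto simp: mult.assoc)
  then show thesis
    using that[OF idem] g idempotent_ideal_eq[OF idem] by simp
qed

lemma idempotent_ideal_principal:
  fixes e :: "'a::comm_ring_1"
  assumes "e * e = e" and "I = {r. r * e = r}"
  shows "principal_ideal I"
  unfolding principal_ideal_def using assms idempotent_ideal_eq by blast

definition idem_partition :: "'i set \<Rightarrow> ('i \<Rightarrow> 'a::comm_ring_1) \<Rightarrow> bool" where
  "idem_partition I a \<longleftrightarrow> finite I \<and> (\<forall>i\<in>I. a i * a i = a i)
     \<and> (\<forall>i\<in>I. \<forall>j\<in>I. i \<noteq> j \<longrightarrow> a i * a j = 0) \<and> sum a I = 1"

lemma idem_partition_mult:
  assumes "idem_partition I a" and "i \<in> I" and "j \<in> I"
  shows "a i * a j = (if i = j then a i else 0)"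
  using assms unfolding idem_partition_def by auto

lemma idem_partition_pick:
  assumes "idem_partition I a" and "i \<in> I"
  shows "a i * (\<Sum>j\<in>I. a j * f j) = a i * f i"
proof -
  have "a i * (\<Sum>j\<in>I. a j * f j) = (\<Sum>j\<in>I. (a i * a j) * f j)"
    by (simp add: sum_distrib_left mult.assoc)
  also have "\<dots> = (\<Sum>j\<in>I. if i = j then a i * f i else 0)"
    using idem_partition_mult[OF assms(1) assms(2)] by (intro sum.cong) auto
  also have "\<dots> = a i * f i"
    using assms unfolding idem_partition_def by simp
  finally show ?thesis .
qed

lemma idem_partition_product:
  assumes a: "idem_partition I a" and b: "idem_partition J b"
  shows "idem_partition (I \<times> J) (\<lambda>(i, j). a i * b j)"
proof -
  have prod: "(a i * b j) * (a k * b l) = (a i * a k) * (b j * b l)" for i j k l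
    by (simp add: mult_ac)
  have "(\<Sum>(i, j)\<in>I \<times> J. a i * b j) = sum a I * sum b J"
    by (simp add: sum_product sum.cartesian_product)
  then show ?thesis
    using a b unfolding idem_partition_def by (auto simp: prod)
qed

definition ann_generated_by :: "('a::comm_ring_1 \<Rightarrow> 'b::ab_group_add \<Rightarrow> 'b) \<Rightarrow> 'b \<Rightarrow> 'a \<Rightarrow> bool" where
  "ann_generated_by scale z e \<longleftrightarrow> e * e = e \<and> ann scale z = {r. r * e = r}"

lemma principal_ann_iff_generated:
  fixes scale :: "'a::comm_ring_1 \<Rightarrow> 'b::ab_group_add \<Rightarrow> 'b"
  assumes "regular_ring TYPE('a)"
  shows "principal_ideal (ann scale z) \<longleftrightarrow> (\<exists>e. ann_generated_by scale z e)"
  using principal_ideal_idempotent_generator[OF assms] idempotent_ideal_principal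
  unfolding ann_generated_by_def by metis

lemma conv_partitionE:
  assumes "y \<in> conv scale S"
  obtains n a x where "idem_partition {..<n::nat} a" and "\<forall>i<n. x i \<in> S"
    and "y = (\<Sum>i<n. scale (a i) (x i))"
proof -
  obtain n a x where "\<forall>i<(n::nat). x i \<in> S \<and> a i \<in> idempotents"
    and "\<forall>i<n. \<forall>j<n. i \<noteq> j \<longrightarrow> a i * a j = 0" and "(\<Sum>i<n. a i) = 1"
    and "y = (\<Sum>i<n. scale (a i) (x i))"
    using assms unfolding conv_def by blast
  then show thesis
    by (intro that[of n a x]) (auto simp: idem_partition_def idempotents_def)
qed

context module
begin

lemma idem_partition_pick_scale:
  assumes "idem_partition I a" and "i \<in> I"
  shows "a i *s (\<Sum>j\<in>I. a j *s x j) = a i *s x i"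
proof -
  have "a i *s (\<Sum>j\<in>I. a j *s x j) = (\<Sum>j\<in>I. (a i * a j) *s x j)"
    by (simp add: scale_sum_right)
  also have "\<dots> = (\<Sum>j\<in>I. if i = j then a i *s x i else 0)"
    using idem_partition_mult[OF assms] by (intro sum.cong) auto
  also have "\<dots> = a i *s x i"
    using assms unfolding idem_partition_def by simp
  finally show ?thesis .
qed

lemma difference_on_product_piece:
  assumes a: "idem_partition I a" and b: "idem_partition J b"
    and "i \<in> I" and "j \<in> J"
  shows "(a i * b j) *s ((\<Sum>k\<in>I. a k *s x k) - (\<Sum>l\<in>J. b l *s x' l))
       = (a i * b j) *s (x i - x' j)"
proof -
  have "(a i * b j) *s (\<Sum>k\<in>I. a k *s x k) = (a i * b j) *s x i"
    using idem_partition_pick_scale[OF a \<open>i \<in> I\<close>, of x]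
    by (metis mult.commute scale_scale)
  moreover have "(a i * b j) *s (\<Sum>l\<in>J. b l *s x' l) = (a i * b j) *s x' j"
    using idem_partition_pick_scale[OF b \<open>j \<in> J\<close>, of x'] by (metis scale_scale)
  ultimately show ?thesis by (simp add: scale_right_diff_distrib)
qed

lemma annihilates_iff_pieces:
  assumes "idem_partition I c"
  shows "r *s z = 0 \<longleftrightarrow> (\<forall>i\<in>I. (r * c i) *s z = 0)"
proof
  assume "\<forall>i\<in>I. (r * c i) *s z = 0"
  then have "(\<Sum>i\<in>I. (r * c i) *s z) = 0" by simp
  moreover have "(\<Sum>i\<in>I. (r * c i) *s z) = (r * sum c I) *s z"
    by (simp add: sum_distrib_left scale_sum_left)
  ultimately show "r *s z = 0"
    using assms unfolding idem_partition_def by simp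
qed (metis scale_scale scale_zero_right mult.commute)

lemma ann_generated_by_glue:
  assumes c: "idem_partition I c"
    and agree: "\<And>i. i \<in> I \<Longrightarrow> c i *s z = c i *s z' i"
    and gen: "\<And>i. i \<in> I \<Longrightarrow> ann_generated_by scale (z' i) (E i)"
  shows "ann_generated_by scale z (\<Sum>i\<in>I. c i * E i)"
proof -
  define e where "e = (\<Sum>i\<in>I. c i * E i)"
  have E_idem: "E i * E i = E i" and E_ann: "r *s z' i = 0 \<longleftrightarrow> r * E i = r"
    if "i \<in> I" for i r
    using gen[OF that] unfolding ann_generated_by_def ann_def by auto
  have pick: "c i * e = c i * E i" if "i \<in> I" for i
    unfolding e_def using idem_partition_pick[OF c that] .
  have piece: "(r * c i) *s z = 0 \<longleftrightarrow> r * c i * E i = r * c i" if "i \<in> I" for i r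
    using agree[OF that] E_ann[OF that, of "r * c i"]
    by (metis mult.commute scale_scale)
  have fixed_iff: "r * e = r \<longleftrightarrow> (\<forall>i\<in>I. r * c i * E i = r * c i)" for r
  proof
    assume "r * e = r"
    then show "\<forall>i\<in>I. r * c i * E i = r * c i"
      using pick by (metis mult.assoc mult.commute)
  next
    assume "\<forall>i\<in>I. r * c i * E i = r * c i"
    then have "r * e = (\<Sum>i\<in>I. r * c i)"
      unfolding e_def by (simp add: sum_distrib_left mult.assoc)
    also have "\<dots> = r"
      using c unfolding idem_partition_def by (simp flip: sum_distrib_left)
    finally show "r * e = r" .
  qed
  have "e * e = (\<Sum>i\<in>I. c i * E i * e)"
    by (subst (1) e_def) (simp add: sum_distrib_right)
  also have "\<dots> = (\<Sum>i\<in>I. E i * (c i * e))"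
    by (simp add: mult_ac)
  also have "\<dots> = (\<Sum>i\<in>I. c i * (E i * E i))"
  proof (intro sum.cong refl)
    fix i assume "i \<in> I"
    then have "E i * (c i * e) = E i * (c i * E i)" by (simp only: pick)
    then show "E i * (c i * e) = c i * (E i * E i)" by (simp add: mult_ac)
  qed
  also have "\<dots> = e"
    using E_idem by (simp add: e_def)
  finally have "e * e = e" .
  moreover have "r *s z = 0 \<longleftrightarrow> r * e = r" for r
    unfolding annihilates_iff_pieces[OF c, of r] fixed_iff using piece by blast
  then have "ann scale z = {r. r * e = r}"
    unfolding ann_def by blast
  ultimately show ?thesis
    unfolding e_def ann_generated_by_def by simp
qed

end

theorem mainTheorem17:
  fixes scale :: "'a::comm_ring_1 \<Rightarrow> 'b::ab_group_add \<Rightarrow> 'b"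
    and S :: "'b set"
  assumes "regular_ring TYPE('a)"
    and "module scale"
    and "metrizable scale S"
  shows "metrizable scale (conv scale S)"
  unfolding metrizable_def
proof (intro ballI)
  fix y y' assume "y \<in> conv scale S" "y' \<in> conv scale S"
  obtain n a x where a: "idem_partition {..<n::nat} a" and x: "\<forall>i<n. x i \<in> S"
    and y: "y = (\<Sum>i<n. scale (a i) (x i))"
    using \<open>y \<in> conv scale S\<close> by (rule conv_partitionE)
  obtain m b x' where b: "idem_partition {..<m::nat} b" and x': "\<forall>j<m. x' j \<in> S"
    and y': "y' = (\<Sum>j<m. scale (b j) (x' j))"
    using \<open>y' \<in> conv scale S\<close> by (rule conv_partitionE)
  define P where "P = {..<n} \<times> {..<m}"
  define z where "z = (\<lambda>(i, j). x i - x' j)"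
  have "\<forall>p\<in>P. \<exists>E. ann_generated_by scale (z p) E"
    using assms(1,3) x x' unfolding P_def z_def metrizable_def
    by (auto simp: principal_ann_iff_generated)
  then obtain E where E: "\<And>p. p \<in> P \<Longrightarrow> ann_generated_by scale (z p) (E p)"
    by metis
  define c where "c = (\<lambda>(i, j). a i * b j)"
  have agree: "\<And>p. p \<in> P \<Longrightarrow> scale (c p) (y - y') = scale (c p) (z p)"
    using module.difference_on_product_piece[OF assms(2) a b]
    unfolding P_def c_def z_def y y' by auto
  have "ann_generated_by scale (y - y') (\<Sum>p\<in>P. c p * E p)"
    using module.ann_generated_by_glue[OF assms(2) idem_partition_product[OF a b]] agree E
    unfolding P_def c_def by blast
  then show "principal_ideal (ann scale (y - y'))"
    using principal_ann_iff_generated[OF assms(1)] by blast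
qed

end
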